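(* Let $\hat a,\hat b,\hat c,\hat d\in\hat{\mathbb Q}$ and suppose there exists $\hat q\in\hat{\mathbb U}$ such that $\hat a\hat q=\hat q\hat b$ and $\hat c\hat q=\hat q\hat d$. Suppose $\hat a=\hat x^*\hat\lambda\hat x$ and $\hat b=\hat y^*\hat\lambda\hat y$, where $\hat x,\hat y\in\hat{\mathbb U}$, $\hat\lambda\in\mathbb{DC}$ and the standard part of $\hat\lambda$ is not a real number. Write $\hat x\hat c\hat x^*=c_1+c_2 j+(c_3+c_4 j)\varepsilon$ and $\hat y\hat d\hat y^*=d_1+d_2 j+(d_3+d_4 j)\varepsilon$ with $c_t,d_t\in\mathbb C$. If $c_2\neq0$, then there are exactly two unit dual quaternions $\hat q$ satisfying both equations, they differ only by sign, and they are $$\hat q=\pm\,\hat x^*\Big(\overline{\sqrt{\tfrac{d_2}{c_2}}}+\frac{\overline{c_2d_4}-\overline{d_2c_4}}{2\,\overline{c_2}^{\,2}}\,\overline{\sqrt{\tfrac{c_2}{d_2}}}\,\varepsilon\Big)\hat y.$$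
   Context: $\mathbb{Q}$ denotes the real quaternions with units $i,j,k$; complex numbers are identified with quaternions $a+bi$, so every quaternion is uniquely $z_1+z_2 j$ with $z_1,z_2\in\mathbb C$. $\varepsilon$ satisfies $\varepsilon\ne0$, $\varepsilon^2=0$ and commutes with quaternions. $\hat{\mathbb Q}$ is the set of dual quaternions $\tilde p_{st}+\tilde p_{\mathcal I}\varepsilon$ ($\tilde p_{st}$ the standard part), with conjugate $\hat p^*=\tilde p_{st}^*+\tilde p_{\mathcal I}^*\varepsilon$. $\mathbb{DC}$ is the set of dual complex numbers $a+b\varepsilon$, $a,b\in\mathbb C$. $\hat{\mathbb U}$ is the set of unit dual quaternions, i.e. $\hat p$ with $|\hat p|=1$, where $|\hat p|=|\tilde p_{st}|+\frac{\mathrm{sc}(\tilde p_{st}^*\tilde p_{\mathcal I})}{|\tilde p_{st}|}\varepsilon$ for $\tilde p_{st}\ne0$, $\mathrm{sc}(\tilde p)=\frac12(\tilde p+\tilde p^* )$; equivalently $\hat p^*\hat p=\hat p\hat p^*=1$. In the formula, $\sqrt{d_2/c_2}$ is a complex square root and $\sqrt{c_2/d_2}$ denotes its reciprocal; bars denote complex conjugation. *)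

theory Defs
  imports Complex_Main
begin

datatype quat = Quat (q_re: real) (q_i: real) (q_j: real) (q_k: real)

instantiation quat :: "{zero, one, plus, minus, uminus, times}"
begin
definition zero_quat_def: "0 = Quat 0 0 0 0"
definition one_quat_def: "1 = Quat 1 0 0 0"
definition plus_quat_def:
  "p + q = Quat (q_re p + q_re q) (q_i p + q_i q) (q_j p + q_j q) (q_k p + q_k q)"
definition minus_quat_def:
  "p - q = Quat (q_re p - q_re q) (q_i p - q_i q) (q_j p - q_j q) (q_k p - q_k q)"
definition uminus_quat_def:
  "- p = Quat (- q_re p) (- q_i p) (- q_j p) (- q_k p)"
definition times_quat_def:
  "p * q = Quat
     (q_re p * q_re q - q_i p * q_i q - q_j p * q_j q - q_k p * q_k q)
     (q_re p * q_i q + q_i p * q_re q + q_j p * q_k q - q_k p * q_j q)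
     (q_re p * q_j q - q_i p * q_k q + q_j p * q_re q + q_k p * q_i q)
     (q_re p * q_k q + q_i p * q_j q - q_j p * q_i q + q_k p * q_re q)"
instance ..
end

definition qcnj :: "quat \<Rightarrow> quat" where
  "qcnj p = Quat (q_re p) (- q_i p) (- q_j p) (- q_k p)"

definition quat_of_complex :: "complex \<Rightarrow> quat" where
  "quat_of_complex z = Quat (Re z) (Im z) 0 0"

definition qj :: quat where
  "qj = Quat 0 0 1 0"

text \<open>Dual quaternions p_st + p_I \<epsilon>.\<close>

datatype dquat = DQ (dq_st: quat) (dq_du: quat)

instantiation dquat :: "{zero, one, plus, minus, uminus, times}"
begin
definition zero_dquat_def: "0 = DQ 0 0"
definition one_dquat_def: "1 = DQ 1 0"
definition plus_dquat_def: "p + q = DQ (dq_st p + dq_st q) (dq_du p + dq_du q)"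
definition minus_dquat_def: "p - q = DQ (dq_st p - dq_st q) (dq_du p - dq_du q)"
definition uminus_dquat_def: "- p = DQ (- dq_st p) (- dq_du p)"
definition times_dquat_def:
  "p * q = DQ (dq_st p * dq_st q) (dq_st p * dq_du q + dq_du p * dq_st q)"
instance ..
end

definition dcnj :: "dquat \<Rightarrow> dquat" where
  "dcnj p = DQ (qcnj (dq_st p)) (qcnj (dq_du p))"

definition unit_dq :: "dquat \<Rightarrow> bool" where
  "unit_dq p \<longleftrightarrow> dcnj p * p = 1 \<and> p * dcnj p = 1"

definition dual_complex :: "complex \<Rightarrow> complex \<Rightarrow> dquat" where
  "dual_complex a b = DQ (quat_of_complex a) (quat_of_complex b)"

definition cquat :: "complex \<Rightarrow> complex \<Rightarrow> quat" where
  "cquat z1 z2 = quat_of_complex z1 + quat_of_complex z2 * qj"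

end

theory Submission
  imports Defs
begin

text \<open>Conjugating by the units x and y turns a solution q into p = x q y*, which has to
  commute with the dual complex number \<lambda>. Since the standard part of \<lambda> is not real,
  this forces p = u + w \<epsilon> with u, w complex. The j-components of the second equation
  then give c2 u* = u d2, so u^2 = c2 / d2 and u is determined up to sign, and
  their dual part, combined with the unit condition u* w + w* u = 0, determines w
  linearly in u. Hence there are at most the two solutions \<plusminus>Q; since the set of
  solutions is nonempty and closed under negation, both occur.\<close>

lemma quat_eqI:
  "q_re p = q_re q \<Longrightarrow> q_i p = q_i q \<Longrightarrow> q_j p = q_j q \<Longrightarrow> q_k p = q_k q \<Longrightarrow> p = q"
  by (cases p; cases q) auto

instance quat :: ring_1
  by standard (auto intro!: quat_eqI simp: zero_quat_def one_quat_def plus_quat_def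
      minus_quat_def uminus_quat_def times_quat_def algebra_simps)

lemma dquat_eqI: "dq_st p = dq_st q \<Longrightarrow> dq_du p = dq_du q \<Longrightarrow> p = q"
  by (cases p; cases q) auto

instance dquat :: ring_1
  by standard (auto intro!: dquat_eqI simp: zero_dquat_def one_dquat_def plus_dquat_def
      minus_dquat_def uminus_dquat_def times_dquat_def algebra_simps)

lemma cquat_eq_Quat: "cquat a b = Quat (Re a) (Im a) (Re b) (Im b)"
  by (simp add: cquat_def quat_of_complex_def qj_def times_quat_def plus_quat_def)

lemma quat_eq_cquat: "q = cquat (Complex (q_re q) (q_i q)) (Complex (q_j q) (q_k q))"
  by (cases q) (simp add: cquat_eq_Quat)

lemma cquat_eq_iff [simp]: "cquat a b = cquat c d \<longleftrightarrow> a = c \<and> b = d"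
  by (auto simp: cquat_eq_Quat complex_eq_iff)

lemma cquat_mult [simp]: "cquat a b * cquat c d = cquat (a * c - b * cnj d) (a * d + b * cnj c)"
  by (simp add: cquat_eq_Quat times_quat_def algebra_simps)

lemma cquat_add [simp]: "cquat a b + cquat c d = cquat (a + c) (b + d)"
  by (simp add: cquat_eq_Quat plus_quat_def)

lemma cquat_uminus [simp]: "- cquat a b = cquat (- a) (- b)"
  by (simp add: cquat_eq_Quat uminus_quat_def)

lemma qcnj_cquat [simp]: "qcnj (cquat a b) = cquat (cnj a) (- b)"
  by (simp add: cquat_eq_Quat qcnj_def)

lemma one_quat_eq_cquat: "1 = cquat 1 0"
  by (simp add: cquat_eq_Quat one_quat_def)

lemma zero_quat_eq_cquat: "0 = cquat 0 0"
  by (simp add: cquat_eq_Quat zero_quat_def)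

lemma dual_complex_eq_cquat: "dual_complex u w = DQ (cquat u 0) (cquat w 0)"
  by (simp add: dual_complex_def quat_of_complex_def cquat_eq_Quat)

lemma dquat_eq_cquat: "\<exists>u v w z. p = DQ (cquat u v) (cquat w z)"
  by (metis dquat.collapse quat_eq_cquat)

lemma qcnj_mult: "qcnj (p * q) = qcnj q * qcnj p"
  by (rule quat_eqI) (simp_all add: qcnj_def times_quat_def algebra_simps)

lemma qcnj_add: "qcnj (p + q) = qcnj p + qcnj q"
  by (rule quat_eqI) (simp_all add: qcnj_def plus_quat_def)

lemma dcnj_mult: "dcnj (p * q) = dcnj q * dcnj p"
  by (rule dquat_eqI) (simp_all add: dcnj_def times_dquat_def qcnj_mult qcnj_add add.commute)

lemma dcnj_dcnj [simp]: "dcnj (dcnj p) = p"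
  by (rule dquat_eqI) (simp_all add: dcnj_def qcnj_def)

lemma dcnj_uminus: "dcnj (- p) = - dcnj p"
  by (rule dquat_eqI) (simp_all add: dcnj_def uminus_dquat_def qcnj_def uminus_quat_def)

lemma one_neq_neg_one_dquat: "(1::dquat) \<noteq> - 1"
  by (simp add: one_dquat_def uminus_dquat_def one_quat_def uminus_quat_def)

lemma unit_dq_mult: "unit_dq p \<Longrightarrow> unit_dq q \<Longrightarrow> unit_dq (p * q)"
  unfolding unit_dq_def dcnj_mult
  by (metis mult.assoc mult_1_left)

lemma unit_dq_dcnj: "unit_dq p \<Longrightarrow> unit_dq (dcnj p)"
  by (auto simp: unit_dq_def)

lemma unit_dq_uminus: "unit_dq q \<Longrightarrow> unit_dq (- q)"
  by (simp add: unit_dq_def dcnj_uminus)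

lemma unit_dq_neq_uminus:
  assumes "unit_dq q"
  shows "q \<noteq> - q"
proof
  assume "q = - q"
  then have "dcnj q * q = - (dcnj q * q)"
    by (metis mult_minus_right)
  with assms one_neq_neg_one_dquat show False
    by (simp add: unit_dq_def)
qed

lemma unit_dq_sandwich_cancel:
  assumes "unit_dq x" "unit_dq y"
  shows "dcnj x * (x * q * dcnj y) * y = q"
proof -
  have "dcnj x * (x * q * dcnj y) * y = (dcnj x * x) * q * (dcnj y * y)"
    by (simp add: mult.assoc)
  with assms show ?thesis
    by (simp add: unit_dq_def)
qed

lemma intertwines_sandwich:
  assumes "unit_dq x" "unit_dq y" and "e * q = q * f"
  shows "(x * e * dcnj x) * (x * q * dcnj y) = (x * q * dcnj y) * (y * f * dcnj y)"
proof -
  have "(x * e * dcnj x) * (x * q * dcnj y) = x * e * (dcnj x * x) * q * dcnj y"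
    by (simp add: mult.assoc)
  also have "\<dots> = x * (q * f) * dcnj y"
    using assms by (simp add: unit_dq_def mult.assoc)
  also have "\<dots> = x * q * (dcnj y * y) * f * dcnj y"
    using assms by (simp add: unit_dq_def mult.assoc)
  also have "\<dots> = (x * q * dcnj y) * (y * f * dcnj y)"
    by (simp add: mult.assoc)
  finally show ?thesis .
qed

lemma commutes_nonreal_dual_complex:
  assumes comm: "dual_complex l1 l2 * p = p * dual_complex l1 l2" and l1: "l1 \<notin> \<real>"
  obtains u w where "p = dual_complex u w"
proof -
  obtain u v w z where p: "p = DQ (cquat u v) (cquat w z)"
    using dquat_eq_cquat by blast
  have l1_cnj: "l1 - cnj l1 \<noteq> 0"
    using l1 Reals_cnj_iff by force
  from comm have st: "l1 * v = v * cnj l1" and du: "l1 * z + l2 * v = z * cnj l1 + v * cnj l2"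
    by (simp_all add: p dual_complex_eq_cquat times_dquat_def)
  from st have "v * (l1 - cnj l1) = 0"
    by (simp add: algebra_simps)
  with l1_cnj have "v = 0"
    by simp
  with du have "z * (l1 - cnj l1) = 0"
    by (simp add: algebra_simps)
  with l1_cnj have "z = 0"
    by simp
  with p \<open>v = 0\<close> show ?thesis
    using that by (simp add: dual_complex_eq_cquat)
qed

lemma unit_dq_dual_complex_iff:
  "unit_dq (dual_complex u w) \<longleftrightarrow> cnj u * u = 1 \<and> cnj u * w + cnj w * u = 0"
  by (auto simp: unit_dq_def dual_complex_eq_cquat dcnj_def times_dquat_def one_dquat_def
      one_quat_eq_cquat zero_quat_eq_cquat algebra_simps)

lemma intertwines_dual_complex_iff:
  "DQ (cquat c1 c2) (cquat c3 c4) * dual_complex u w = dual_complex u w * DQ (cquat d1 d2) (cquat d3 d4)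
   \<longleftrightarrow> c1 * u = u * d1 \<and> c2 * cnj u = u * d2 \<and> c1 * w + c3 * u = u * d3 + w * d1
       \<and> c2 * cnj w + c4 * cnj u = u * d4 + w * d2"
  by (simp add: dual_complex_eq_cquat times_dquat_def)

lemma intertwiner_standard_part_eq:
  fixes u c2 d2 s :: complex
  assumes u: "cnj u * u = 1" and j_part: "c2 * cnj u = u * d2"
    and c2: "c2 \<noteq> 0" and s: "s\<^sup>2 = d2 / c2"
  shows "u = cnj s \<or> u = - cnj s"
proof -
  have c2_eq: "c2 = u\<^sup>2 * d2"
  proof -
    have "c2 = (c2 * cnj u) * u"
      using u by (simp add: mult.assoc)
    with j_part show ?thesis
      by (simp add: power2_eq_square algebra_simps)
  qed
  with c2 have d2: "d2 \<noteq> 0"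
    by auto
  have "s\<^sup>2 * u\<^sup>2 = 1"
    using s c2 c2_eq d2 by (simp add: field_simps)
  then have "cnj (s\<^sup>2 * u\<^sup>2) * u\<^sup>2 = u\<^sup>2"
    by simp
  moreover have "(cnj u)\<^sup>2 * u\<^sup>2 = 1"
    using u by (metis power_mult_distrib complex_cnj_power power_one)
  ultimately have "(cnj s)\<^sup>2 = u\<^sup>2"
    by (simp add: mult.assoc)
  then have "(u - cnj s) * (u + cnj s) = 0"
    by (simp add: algebra_simps power2_eq_square)
  then show ?thesis
    by (auto simp: eq_neg_iff_add_eq_0)
qed

lemma intertwiner_dual_part_eq:
  fixes u w c2 c4 d2 d4 :: complex
  assumes u: "cnj u * u = 1" and unit_du: "cnj u * w + cnj w * u = 0"
    and j_part: "c2 * cnj u = u * d2" and j_du: "c2 * cnj w + c4 * cnj u = u * d4 + w * d2"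
    and c2: "c2 \<noteq> 0"
  shows "w = (cnj (c2 * d4) - cnj (d2 * c4)) / (2 * (cnj c2)\<^sup>2) * cnj u"
proof -
  have cnj_w: "cnj w = - cnj u * w * cnj u"
  proof -
    have "cnj w = cnj w * u * cnj u"
      using u by (simp add: mult.assoc mult.commute)
    with unit_du show ?thesis
      by (metis add_eq_0_iff mult_minus_left)
  qed
  have cnj_d2: "cnj d2 = u\<^sup>2 * cnj c2"
  proof -
    have "u\<^sup>2 * cnj c2 = u * cnj (c2 * cnj u)"
      by (simp add: power2_eq_square)
    also have "\<dots> = (u * cnj u) * cnj d2"
      by (simp add: j_part mult.assoc)
    finally show ?thesis
      using u by (simp add: mult.commute)
  qed
  have "cnj w * cnj d2 = - w * cnj c2 * (cnj u * u)\<^sup>2"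
    unfolding cnj_w cnj_d2 by (simp add: power2_eq_square algebra_simps)
  with u have "cnj w * cnj d2 = - w * cnj c2"
    by simp
  with arg_cong[OF j_du, of cnj]
  have w_eq: "2 * cnj c2 * w = cnj u * cnj d4 - cnj c4 * u"
    by (simp add: algebra_simps)
  have "(cnj (c2 * d4) - cnj (d2 * c4)) * cnj u = cnj c2 * (cnj u * cnj d4 - cnj c4 * u * (u * cnj u))"
    unfolding complex_cnj_mult cnj_d2 by (simp add: power2_eq_square algebra_simps)
  also have "\<dots> = cnj c2 * (2 * cnj c2 * w)"
    using w_eq u by (simp add: mult.commute)
  finally have "(cnj (c2 * d4) - cnj (d2 * c4)) * cnj u = w * (2 * (cnj c2)\<^sup>2)"
    by (simp add: power2_eq_square algebra_simps)
  then show ?thesis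
    using c2 by (simp add: field_simps)
qed

lemma unit_intertwiner_eq:
  fixes l1 l2 c1 c2 c3 c4 d1 d2 d3 d4 s :: complex
  defines "P \<equiv> dual_complex (cnj s)
    ((cnj (c2 * d4) - cnj (d2 * c4)) / (2 * (cnj c2)\<^sup>2) * cnj (inverse s))"
  assumes p: "unit_dq p"
    and comm: "dual_complex l1 l2 * p = p * dual_complex l1 l2" and l1: "l1 \<notin> \<real>"
    and intertw: "DQ (cquat c1 c2) (cquat c3 c4) * p = p * DQ (cquat d1 d2) (cquat d3 d4)"
    and c2: "c2 \<noteq> 0" and s: "s\<^sup>2 = d2 / c2"
  shows "p = P \<or> p = - P"
proof -
  obtain u w where p_eq: "p = dual_complex u w"
    using commutes_nonreal_dual_complex[OF comm l1] .
  have u: "cnj u * u = 1" and unit_du: "cnj u * w + cnj w * u = 0"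
    using p by (simp_all add: p_eq unit_dq_dual_complex_iff)
  have j_part: "c2 * cnj u = u * d2" and j_du: "c2 * cnj w + c4 * cnj u = u * d4 + w * d2"
    using intertw by (simp_all add: p_eq intertwines_dual_complex_iff)
  have inv_u: "inverse (cnj u) = u"
    using u by (rule inverse_unique)
  have w: "w = (cnj (c2 * d4) - cnj (d2 * c4)) / (2 * (cnj c2)\<^sup>2) * cnj u"
    using intertwiner_dual_part_eq[OF u unit_du j_part j_du c2] .
  from intertwiner_standard_part_eq[OF u j_part c2 s] show ?thesis
  proof
    assume "u = cnj s"
    then show ?thesis
      using inv_u by (simp add: P_def p_eq w)
  next
    assume "u = - cnj s"
    then show ?thesis
      using inv_u by (simp add: P_def p_eq w dual_complex_eq_cquat uminus_dquat_def)
  qed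
qed

lemma unit_solution_eq:
  fixes a b c d x y q :: dquat and l1 l2 c1 c2 c3 c4 d1 d2 d3 d4 s :: complex
  defines "Q \<equiv> dcnj x * dual_complex (cnj s)
    ((cnj (c2 * d4) - cnj (d2 * c4)) / (2 * (cnj c2)\<^sup>2) * cnj (inverse s)) * y"
  assumes ux: "unit_dq x" and uy: "unit_dq y"
    and a_eq: "a = dcnj x * dual_complex l1 l2 * x"
    and b_eq: "b = dcnj y * dual_complex l1 l2 * y" and l1: "l1 \<notin> \<real>"
    and c_eq: "x * c * dcnj x = DQ (cquat c1 c2) (cquat c3 c4)"
    and d_eq: "y * d * dcnj y = DQ (cquat d1 d2) (cquat d3 d4)"
    and c2: "c2 \<noteq> 0" and s: "s\<^sup>2 = d2 / c2"
    and uq: "unit_dq q" and aq: "a * q = q * b" and cq: "c * q = q * d"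
  shows "q = Q \<or> q = - Q"
proof -
  define p where "p = x * q * dcnj y"
  have a_conj: "x * a * dcnj x = dual_complex l1 l2"
    and b_conj: "y * b * dcnj y = dual_complex l1 l2"
    using unit_dq_sandwich_cancel[OF unit_dq_dcnj unit_dq_dcnj, of _ _ "dual_complex l1 l2"] ux uy
    by (simp_all add: a_eq b_eq mult.assoc)
  have unit_p: "unit_dq p"
    unfolding p_def using ux uy uq by (intro unit_dq_mult unit_dq_dcnj)
  have comm_p: "dual_complex l1 l2 * p = p * dual_complex l1 l2"
    using intertwines_sandwich[OF ux uy aq] by (simp add: p_def a_conj b_conj)
  have intertw_p: "DQ (cquat c1 c2) (cquat c3 c4) * p = p * DQ (cquat d1 d2) (cquat d3 d4)"
    using intertwines_sandwich[OF ux uy cq] by (simp add: p_def c_eq d_eq)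
  from unit_intertwiner_eq[OF unit_p comm_p l1 intertw_p c2 s]
  show ?thesis
    using unit_dq_sandwich_cancel[OF ux uy, of q] by (auto simp: Q_def p_def)
qed

theorem theorem3p1:
  fixes a b c d x y :: dquat
    and lam_st lam_du c1 c2 c3 c4 d1 d2 d3 d4 :: complex
  assumes ex_q: "\<exists>q. unit_dq q \<and> a * q = q * b \<and> c * q = q * d"
    and ux: "unit_dq x" and uy: "unit_dq y"
    and a_eq: "a = dcnj x * dual_complex lam_st lam_du * x"
    and b_eq: "b = dcnj y * dual_complex lam_st lam_du * y"
    and lam_nonreal: "lam_st \<notin> \<real>"
    and c_eq: "x * c * dcnj x = DQ (cquat c1 c2) (cquat c3 c4)"
    and d_eq: "y * d * dcnj y = DQ (cquat d1 d2) (cquat d3 d4)"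
    and c2_nz: "c2 \<noteq> 0"
  shows "\<forall>s::complex. s\<^sup>2 = d2 / c2 \<longrightarrow>
    (let Q = dcnj x * dual_complex (cnj s)
               ((cnj (c2 * d4) - cnj (d2 * c4)) / (2 * (cnj c2)\<^sup>2) * cnj (inverse s)) * y
     in {q. unit_dq q \<and> a * q = q * b \<and> c * q = q * d} = {Q, - Q} \<and> Q \<noteq> - Q)"
proof (intro allI impI)
  fix s :: complex
  assume s: "s\<^sup>2 = d2 / c2"
  define Q where "Q = dcnj x * dual_complex (cnj s)
    ((cnj (c2 * d4) - cnj (d2 * c4)) / (2 * (cnj c2)\<^sup>2) * cnj (inverse s)) * y"
  define S where "S = {q. unit_dq q \<and> a * q = q * b \<and> c * q = q * d}"
  have solution_eq: "q = Q \<or> q = - Q" if "q \<in> S" for q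
    using that unit_solution_eq[OF ux uy a_eq b_eq lam_nonreal c_eq d_eq c2_nz s]
    unfolding S_def Q_def by blast
  have S_uminus: "- q \<in> S" if "q \<in> S" for q
    using that by (auto simp: S_def unit_dq_uminus)
  obtain q0 where q0: "q0 \<in> S"
    using ex_q by (auto simp: S_def)
  then have "Q \<in> S" and "- Q \<in> S"
    using solution_eq[OF q0] S_uminus[OF q0] S_uminus[of "- Q"] by auto
  with solution_eq have "S = {Q, - Q}" and "Q \<noteq> - Q"
    by (auto simp: S_def unit_dq_neq_uminus)
  then show "let Q = Q in S = {Q, - Q} \<and> Q \<noteq> - Q"
    by simp
qed

end
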